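(* Let $D(z)=\frac{1-\sqrt{1-4z^2}}{2z^2}$, $E(z)=zD(z)=\frac{1-\sqrt{1-4z^2}}{2z}$ and $M_{up}(z,u)=\frac{uE(z)}{1-uE(z)}$. Then for every $k\ge 1$, \[ F_k(z,u)=\frac{1}{z^{k-2}}\frac{d}{dz}\left(z^{k-1}\,\frac{u\,F_{k-1}(z,u)-E(z)\,F_{k-1}(z,E(z))}{u-E(z)}\,M_{up}(z,u)\right), \] where $F_0(z,u)=1$; and for every $k\ge 0$, \[ B_k(z)=F_k(z,E(z))\,D(z). \]
   Context: A bicolored Dyck meander is a finite sequence of steps from $\{U_1,U_2,D\}$, where $U_1$ and $U_2$ raise the height by $1$ and $D$ lowers it by $1$, starting at height $0$ and never going below height $0$; its length is its number of steps. A bicolored Dyck path is a bicolored Dyck meander ending at height $0$. The weight of such a path is the product, over all its $U_2$ steps, of $m+j-1$, where that $U_2$ step is the $m$-th step of the path and the $j$-th $U_2$ step of the path ($U_1$ and $D$ steps have weight $1$). For $k\ge1$, let $f_{k,n,\ell}$ be the total weight of bicolored Dyck meanders of length $n$ with exactly $k$ steps $U_2$, whose last step is a $U_2$ step, and which end at height $\ell$; set $F_k(z,u)=\sum_{n,\ell\ge 0}f_{k,n,\ell}z^nu^\ell$. For $k\ge 0$, $B_k(z)$ is the sum over all bicolored Dyck paths with exactly $k$ steps $U_2$ of (weight)$\cdot z^{\text{length}}$. *)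

theory Defs
  imports "HOL-Analysis.Analysis"
begin

datatype step = U1 | U2 | Dn

fun step_val :: "step \<Rightarrow> int" where
  "step_val U1 = 1" | "step_val U2 = 1" | "step_val Dn = -1"

definition height :: "step list \<Rightarrow> int" where
  "height xs = sum_list (map step_val xs)"

definition meander :: "step list \<Rightarrow> bool" where
  "meander xs \<longleftrightarrow> (\<forall>i\<le>length xs. height (take i xs) \<ge> 0)"

definition num_U2 :: "step list \<Rightarrow> nat" where
  "num_U2 xs = length (filter (\<lambda>s. s = U2) xs)"

text \<open>Weight: product over U2 steps of (m + j - 1), where the step is the m-th step
  (m = i+1 for 0-based position i) and the j-th U2 step (j = number of U2 among the first m steps).\<close>
definition weight :: "step list \<Rightarrow> nat" where
  "weight xs = (\<Prod>i\<in>{i. i < length xs \<and> xs ! i = U2}. (Suc i) + num_U2 (take (Suc i) xs) - 1)"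

definition paths_len :: "nat \<Rightarrow> step list set" where
  "paths_len n = {xs. set xs \<subseteq> {U1, U2, Dn} \<and> length xs = n}"

definition fcoef :: "nat \<Rightarrow> nat \<Rightarrow> nat \<Rightarrow> nat" where
  "fcoef k n l = (\<Sum>xs\<in>{xs\<in>paths_len n. meander xs \<and> num_U2 xs = k \<and> xs \<noteq> [] \<and>
       last xs = U2 \<and> height xs = int l}. weight xs)"

definition bcoef :: "nat \<Rightarrow> nat \<Rightarrow> nat" where
  "bcoef k n = (\<Sum>xs\<in>{xs\<in>paths_len n. meander xs \<and> num_U2 xs = k \<and> height xs = 0}. weight xs)"

definition Fgf :: "nat \<Rightarrow> complex \<Rightarrow> complex \<Rightarrow> complex" where
  "Fgf k z u = (if k = 0 then 1 else
     (\<Sum>n. \<Sum>l\<le>n. of_nat (fcoef k n l) * z ^ n * u ^ l))"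

definition Bgf :: "nat \<Rightarrow> complex \<Rightarrow> complex" where
  "Bgf k z = (\<Sum>n. of_nat (bcoef k n) * z ^ n)"

definition Dgf :: "complex \<Rightarrow> complex" where
  "Dgf z = (1 - csqrt (1 - 4 * z\<^sup>2)) / (2 * z\<^sup>2)"

definition Egf :: "complex \<Rightarrow> complex" where
  "Egf z = (1 - csqrt (1 - 4 * z\<^sup>2)) / (2 * z)"

definition Mup :: "complex \<Rightarrow> complex \<Rightarrow> complex" where
  "Mup z u = u * Egf z / (1 - u * Egf z)"

end

theory Submission
  imports Defs
begin

text \<open>
  A meander ending with its k-th U2 step is q followed by U2, where q is a meander with k - 1
  U2 steps, and that last step has weight |q| + k; this factor is what the operator
  z^(2-k) d/dz z^k produces from z^(|q|+1). A general meander splits at its last U2 step into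
  such a path and a U1/D tail that starts at the current height c and stays nonnegative.
  A first-passage decomposition gives T_c = u^c T_0 + z D T_(c-1) and T_0 = 1 + z T_1 for the
  generating functions of these tails, hence (u - E) T_c = (u^(c+1) - E^(c+1)) T_0 with
  E = z D, and z u T_0 = M_up. Summing over the part before the tail yields the kernel-method
  quotient; putting u = 0 keeps only the tails returning to height 0, which gives
  B_k = F_k(z, E) D. Finally D = 1 + z^2 D^2, and the bound |D| \<le> 1/(1 - 3|z|) < 4 for
  |z| < 1/4 selects the branch of the square root.
\<close>

lemma height_simps [simp]:
  "height [] = 0"
  "height (x # xs) = step_val x + height xs"
  "height (xs @ ys) = height xs + height ys"
  by (simp_all add: height_def)

lemma num_U2_simps [simp]:
  "num_U2 [] = 0"
  "num_U2 (x # xs) = (if x = U2 then 1 else 0) + num_U2 xs"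
  "num_U2 (xs @ ys) = num_U2 xs + num_U2 ys"
  by (simp_all add: num_U2_def)

lemma num_U2_eq_0_iff: "num_U2 xs = 0 \<longleftrightarrow> U2 \<notin> set xs"
  by (auto simp: num_U2_def filter_empty_conv)

lemma height_le_length: "height xs \<le> int (length xs)"
proof (induction xs)
  case (Cons x xs)
  then show ?case by (cases x) auto
qed simp

lemma UNIV_step: "(UNIV :: step set) = {U1, U2, Dn}"
  using step.exhaust by auto

instance step :: finite
  by standard (simp add: UNIV_step)

lemma paths_len_eq: "paths_len n = {xs. length xs = n}"
  by (simp add: paths_len_def flip: UNIV_step)

definition meander_from :: "int \<Rightarrow> step list \<Rightarrow> bool" where
  "meander_from c xs \<longleftrightarrow> (\<forall>i\<le>length xs. c + height (take i xs) \<ge> 0)"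

lemma meander_iff_meander_from: "meander xs \<longleftrightarrow> meander_from 0 xs"
  by (simp add: meander_def meander_from_def)

lemma meander_from_Nil [simp]: "meander_from c [] \<longleftrightarrow> c \<ge> 0"
  by (simp add: meander_from_def)

lemma meander_from_Cons [simp]:
  "meander_from c (x # xs) \<longleftrightarrow> c \<ge> 0 \<and> meander_from (c + step_val x) xs"
  by (simp add: meander_from_def All_less_Suc2 add.assoc flip: less_Suc_eq_le)

lemma meander_from_nonneg: "meander_from c xs \<Longrightarrow> c \<ge> 0"
  by (cases xs) auto

lemma meander_from_append:
  "meander_from c (xs @ ys) \<longleftrightarrow> meander_from c xs \<and> meander_from (c + height xs) ys"
  by (induction xs arbitrary: c) (auto simp: add.assoc dest: meander_from_nonneg)

lemma meander_from_height_nonneg: "meander_from c xs \<Longrightarrow> c + height xs \<ge> 0"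
  using meander_from_append[of c xs "[]"] by simp

lemma meander_from_mono: "meander_from c xs \<Longrightarrow> c \<le> d \<Longrightarrow> meander_from d xs"
  unfolding meander_from_def by force

lemma meander_height_nonneg: "meander xs \<Longrightarrow> height xs \<ge> 0"
  using meander_from_height_nonneg[of 0 xs] by (simp add: meander_iff_meander_from)

lemma weight_append_no_U2:
  assumes "U2 \<notin> set ys"
  shows "weight (xs @ ys) = weight xs"
proof -
  have "i < length (xs @ ys) \<and> (xs @ ys) ! i = U2 \<longleftrightarrow> i < length xs \<and> xs ! i = U2" for i
    using assms by (auto simp: nth_append in_set_conv_nth)
  then show ?thesis
    unfolding weight_def by (intro prod.cong) (auto simp: nth_append)
qed

lemma weight_no_U2: "U2 \<notin> set xs \<Longrightarrow> weight xs = 1"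
  using weight_append_no_U2[of xs "[]"] by (simp add: weight_def)

lemma weight_snoc_U2: "weight (xs @ [U2]) = (length xs + num_U2 xs + 1) * weight xs"
proof -
  have "{i. i < length (xs @ [U2]) \<and> (xs @ [U2]) ! i = U2}
      = insert (length xs) {i. i < length xs \<and> xs ! i = U2}"
    by (auto simp: nth_append less_Suc_eq)
  then show ?thesis
    unfolding weight_def by simp
qed

lemma weight_le: "weight xs \<le> (2 * length xs) ^ num_U2 xs"
proof -
  have "weight xs \<le> (\<Prod>i\<in>{i. i < length xs \<and> xs ! i = U2}. 2 * length xs)"
    unfolding weight_def
  proof (rule prod_mono)
    fix i assume "i \<in> {i. i < length xs \<and> xs ! i = U2}"
    moreover have "num_U2 (take (Suc i) xs) \<le> Suc i"
      unfolding num_U2_def by (metis length_filter_le length_take min.bounded_iff)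
    ultimately show "0 \<le> Suc i + num_U2 (take (Suc i) xs) - 1
        \<and> Suc i + num_U2 (take (Suc i) xs) - 1 \<le> 2 * length xs" by simp
  qed
  also have "\<dots> = (2 * length xs) ^ num_U2 xs"
    by (simp add: num_U2_def length_filter_conv_card)
  finally show ?thesis .
qed

section \<open>Sums over words\<close>

lemma summable_real_power_times_geometric:
  fixes x :: real
  assumes "\<bar>x\<bar> < 1"
  shows "summable (\<lambda>n. real n ^ j * x ^ n)"
  using assms
proof (induction j arbitrary: x)
  case (Suc j)
  have "summable (\<lambda>n. x * (diffs (\<lambda>n. real n ^ j) n * x ^ n))"
    by (intro summable_mult termdiff_converges[where K = 1]) (use Suc in auto)
  then have "summable (\<lambda>n. real (Suc n) ^ Suc j * x ^ Suc n)"
    by (simp add: diffs_def algebra_simps)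
  then show ?case
    by (subst summable_Suc_iff[symmetric])
qed simp

lemma finite_lists_of_length: "finite {xs :: 'a::finite list. length xs = n}"
  using finite_lists_length_eq[of "UNIV :: 'a set" n] by simp

lemma card_lists_of_length: "card {xs :: 'a::finite list. length xs = n} = CARD('a) ^ n"
  using card_lists_length_eq[of "UNIV :: 'a set" n] by simp

lemma has_sum_length_fibers:
  fixes f :: "'a::finite list \<Rightarrow> 'b::{topological_comm_monoid_add, t3_space}"
  assumes "(f has_sum s) S"
  shows "((\<lambda>n. \<Sum>xs\<in>{xs \<in> S. length xs = n}. f xs) has_sum s) UNIV"
proof (rule has_sum_SigmaD)
  have "bij_betw (\<lambda>xs. (length xs, xs)) S (SIGMA n:UNIV. {xs \<in> S. length xs = n})"
    by (rule bij_betwI[where g = snd]) auto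
  from has_sum_reindex_bij_betw[OF this, of "\<lambda>(n, xs). f xs" s]
  show "((\<lambda>(n, xs). f xs) has_sum s) (SIGMA n:UNIV. {xs \<in> S. length xs = n})"
    using assms by simp
  show "((\<lambda>xs. case (n, xs) of (n, xs) \<Rightarrow> f xs) has_sum (\<Sum>xs\<in>{xs \<in> S. length xs = n}. f xs))
      {xs \<in> S. length xs = n}" for n
    by (intro has_sum_finiteI) (auto intro: finite_subset[OF _ finite_lists_of_length])
qed

lemma sums_length_fibers:
  fixes f :: "'a::finite list \<Rightarrow> 'b::banach"
  assumes "f summable_on S"
  shows "(\<lambda>n. \<Sum>xs\<in>{xs \<in> S. length xs = n}. f xs) sums infsum f S"
  using has_sum_length_fibers[OF has_sum_infsum[OF assms]] by (rule has_sum_imp_sums)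

lemma has_sum_length_power_lists:
  fixes r :: real
  assumes "0 \<le> r" "CARD('a) * r < 1"
  shows "((\<lambda>xs :: 'a::finite list. real (length xs) ^ j * r ^ length xs)
           has_sum (\<Sum>n. real n ^ j * (CARD('a) * r) ^ n)) UNIV"
proof -
  let ?f = "\<lambda>xs :: 'a list. real (length xs) ^ j * r ^ length xs"
  let ?g = "\<lambda>n. real n ^ j * (CARD('a) * r) ^ n"
  have fiber: "((\<lambda>xs. ?f (snd (n, xs))) has_sum ?g n) {xs. length xs = n}" for n
  proof -
    have "(\<Sum>xs | length xs = n. ?f xs) = real (card {xs :: 'a list. length xs = n}) * (real n ^ j * r ^ n)"
      by simp
    also have "\<dots> = ?g n"
      by (simp add: card_lists_of_length power_mult_distrib)
    finally have sum: "(\<Sum>xs | length xs = n. ?f xs) = ?g n" .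
    show ?thesis
      unfolding snd_conv sum[symmetric] by (rule has_sum_finite[OF finite_lists_of_length])
  qed
  have "summable ?g"
    by (rule summable_real_power_times_geometric) (use assms in auto)
  then have "(?g has_sum suminf ?g) UNIV"
    by (intro sums_nonneg_imp_has_sum summable_sums) (use assms in auto)
  moreover have "(\<lambda>p. ?f (snd p)) summable_on (SIGMA n:UNIV. {xs. length xs = n})"
    by (rule summable_on_SigmaI[OF fiber]) (use \<open>summable ?g\<close> assms in
        \<open>auto intro: summable_nonneg_imp_summable_on\<close>)
  ultimately have sigma: "((\<lambda>p. ?f (snd p)) has_sum suminf ?g) (SIGMA n:UNIV. {xs. length xs = n})"
    by (rule has_sum_SigmaI[OF fiber])
  have bij: "bij_betw snd (SIGMA n:UNIV. {xs :: 'a list. length xs = n}) UNIV"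
    by (rule bij_betwI[where g = "\<lambda>xs. (length xs, xs)"]) auto
  from sigma show ?thesis
    using has_sum_reindex_bij_betw[OF bij, where f = ?f] by simp
qed

lemma abs_summable_on_lists_if_norm_le:
  fixes f :: "'a::finite list \<Rightarrow> 'b::real_normed_vector" and r :: real
  assumes "0 \<le> r" "CARD('a) * r < 1"
    and "\<And>xs. xs \<in> S \<Longrightarrow> norm (f xs) \<le> C * (real (length xs) ^ j * r ^ length xs)"
  shows "(\<lambda>xs. norm (f xs)) summable_on S"
proof -
  have "(\<lambda>xs :: 'a list. real (length xs) ^ j * r ^ length xs) summable_on UNIV"
    using has_sum_length_power_lists[OF assms(1,2)] by (rule has_sum_imp_summable)
  then have "(\<lambda>xs :: 'a list. C * (real (length xs) ^ j * r ^ length xs)) summable_on S"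
    by (intro summable_on_cmult_right) (rule summable_on_subset_banach[OF _ subset_UNIV])
  then show ?thesis
    by (rule summable_on_comparison_test) (use assms in auto)
qed

lemma norm_infsum_lists_le:
  fixes f :: "'a::finite list \<Rightarrow> 'b::banach" and r :: real
  assumes "0 \<le> r" "CARD('a) * r < 1"
    and "\<And>xs. xs \<in> S \<Longrightarrow> norm (f xs) \<le> r ^ length xs"
  shows "norm (infsum f S) \<le> 1 / (1 - CARD('a) * r)"
proof -
  have geom: "((\<lambda>xs :: 'a list. r ^ length xs) has_sum (1 / (1 - CARD('a) * r))) UNIV"
    using has_sum_length_power_lists[OF assms(1,2), of 0] assms(1,2)
    by (simp add: suminf_geometric)
  have abs: "(\<lambda>xs. norm (f xs)) summable_on S"
    by (rule abs_summable_on_lists_if_norm_le[where C = 1 and j = 0]) (use assms in auto)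
  then have "norm (infsum f S) \<le> infsum (\<lambda>xs. norm (f xs)) S"
    by (rule norm_infsum_bound)
  also have "\<dots> \<le> infsum (\<lambda>xs :: 'a list. r ^ length xs) UNIV"
    by (intro infsum_mono_neutral abs has_sum_imp_summable[OF geom]) (use assms in auto)
  also have "\<dots> = 1 / (1 - CARD('a) * r)"
    using geom by (rule infsumI)
  finally show ?thesis .
qed

lemma has_sum_diff:
  fixes f g :: "'a \<Rightarrow> 'b::topological_ab_group_add"
  assumes "(f has_sum a) A" "(g has_sum b) A"
  shows "((\<lambda>x. f x - g x) has_sum (a - b)) A"
  using has_sum_add[OF assms(1), of "\<lambda>x. - g x" "- b"] assms(2)
  by (simp add: has_sum_uminus)

lemma has_sum_reindex_Sigma_mult:
  fixes f :: "'c \<Rightarrow> 'd::real_normed_algebra"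
  assumes inj: "inj_on g (Sigma A B)"
    and summable: "f summable_on g ` Sigma A B"
    and f: "\<And>a b. a \<in> A \<Longrightarrow> b \<in> B a \<Longrightarrow> f (g (a, b)) = p a * q a b"
    and q: "\<And>a. a \<in> A \<Longrightarrow> (q a has_sum Q a) (B a)"
  shows "((\<lambda>a. p a * Q a) has_sum infsum f (g ` Sigma A B)) A"
proof (rule has_sum_SigmaD)
  show "((f \<circ> g) has_sum infsum f (g ` Sigma A B)) (Sigma A B)"
    using has_sum_infsum[OF summable] has_sum_reindex[OF inj] by blast
  show "((\<lambda>b. (f \<circ> g) (a, b)) has_sum p a * Q a) (B a)" if "a \<in> A" for a
    using has_sum_cmult_right[OF q[OF that], of "p a"] by (rule has_sum_cong[THEN iffD1, rotated])
       (use f that in auto)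
qed

section \<open>U1/D tails and Dyck paths\<close>

definition plain_meanders :: "nat \<Rightarrow> step list set" where
  "plain_meanders c = {s. U2 \<notin> set s \<and> meander_from (int c) s}"

definition plain_dyck_paths :: "step list set" where
  "plain_dyck_paths = {d \<in> plain_meanders 0. height d = 0}"

definition tail_monomial :: "complex \<Rightarrow> complex \<Rightarrow> nat \<Rightarrow> step list \<Rightarrow> complex" where
  "tail_monomial z u c s = z ^ length s * u ^ nat (int c + height s)"

definition tail_gf :: "nat \<Rightarrow> complex \<Rightarrow> complex \<Rightarrow> complex" where
  "tail_gf c z u = infsum (tail_monomial z u c) (plain_meanders c)"

definition dyck_gf :: "complex \<Rightarrow> complex" where
  "dyck_gf z = infsum (\<lambda>d. z ^ length d) plain_dyck_paths"

lemma card_UNIV_step: "CARD(step) = 3"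
  by (simp add: UNIV_step)

lemma summable_on_if_norm_le_power_length:
  fixes f :: "step list \<Rightarrow> complex"
  assumes "norm z < 1/3" "\<And>s. s \<in> S \<Longrightarrow> norm (f s) \<le> norm z ^ length s"
  shows "f summable_on S"
  by (rule abs_summable_summable,
      rule abs_summable_on_lists_if_norm_le[where C = 1 and j = 0 and r = "norm z"])
     (use assms in \<open>auto simp: card_UNIV_step\<close>)

lemma has_sum_tail_gf:
  assumes "norm z < 1/3" "norm u \<le> 1"
  shows "(tail_monomial z u c has_sum tail_gf c z u) (plain_meanders c)"
proof -
  have "norm (tail_monomial z u c s) \<le> norm z ^ length s" for s
    using assms by (simp add: tail_monomial_def norm_mult norm_power mult_left_le power_le_one)
  then show ?thesis
    unfolding tail_gf_def by (intro has_sum_infsum summable_on_if_norm_le_power_length[OF assms(1)])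
qed

lemma has_sum_dyck_gf:
  assumes "norm z < 1/3"
  shows "((\<lambda>d. z ^ length d) has_sum dyck_gf z) plain_dyck_paths"
  unfolding dyck_gf_def
  by (intro has_sum_infsum summable_on_if_norm_le_power_length[OF assms]) (simp add: norm_power)

lemma norm_dyck_gf_le:
  assumes "norm z < 1/3"
  shows "norm (dyck_gf z) \<le> 1 / (1 - 3 * norm z)"
  using norm_infsum_lists_le[of "norm z" plain_dyck_paths "\<lambda>d. z ^ length d"] assms
  by (simp add: dyck_gf_def card_UNIV_step norm_power)

lemma plain_meanders_0_eq: "plain_meanders 0 = insert [] ((#) U1 ` plain_meanders 1)"
proof (intro set_eqI iffI)
  fix s assume s: "s \<in> plain_meanders 0"
  show "s \<in> insert [] ((#) U1 ` plain_meanders 1)"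
  proof (cases s)
    case (Cons x t)
    with s have "x = U1"
      by (cases x) (auto simp: plain_meanders_def dest: meander_from_nonneg)
    with s Cons show ?thesis by (auto simp: plain_meanders_def)
  qed simp
qed (auto simp: plain_meanders_def)

lemma tail_gf_0_eq:
  assumes "norm z < 1/3" "norm u \<le> 1"
  shows "tail_gf 0 z u = 1 + z * tail_gf 1 z u"
proof -
  have "((\<lambda>s. z * tail_monomial z u 1 s) has_sum (z * tail_gf 1 z u)) (plain_meanders 1)"
    by (rule has_sum_cmult_right[OF has_sum_tail_gf[OF assms]])
  then have "(tail_monomial z u 0 has_sum (z * tail_gf 1 z u)) ((#) U1 ` plain_meanders 1)"
    by (subst has_sum_reindex) (auto simp: tail_monomial_def o_def add.commute mult.assoc)
  then have "(tail_monomial z u 0 has_sum (tail_monomial z u 0 [] + z * tail_gf 1 z u))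
      (insert [] ((#) U1 ` plain_meanders 1))"
    by (intro has_sum_insert) auto
  then have "(tail_monomial z u 0 has_sum (1 + z * tail_gf 1 z u)) (plain_meanders 0)"
    by (simp add: plain_meanders_0_eq tail_monomial_def)
  then show ?thesis
    using has_sum_tail_gf[OF assms, of 0] has_sum_unique by blast
qed

lemma first_passage_split:
  "\<not> meander_from a s \<Longrightarrow> a \<ge> 0 \<Longrightarrow> U2 \<notin> set s
    \<Longrightarrow> \<exists>d s'. s = d @ Dn # s' \<and> meander_from a d \<and> a + height d = 0"
proof (induction s arbitrary: a)
  case (Cons x t)
  show ?case
  proof (cases "a + step_val x < 0")
    case True
    with Cons.prems have "x = Dn \<and> a = 0"
      by (cases x) auto
    then show ?thesis
      by (intro exI[of _ "[]"] exI[of _ t]) auto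
  next
    case False
    with Cons.prems obtain d s' where "t = d @ Dn # s'" "meander_from (a + step_val x) d"
        "a + step_val x + height d = 0"
      using Cons.IH[of "a + step_val x"] by auto
    with Cons.prems show ?thesis
      by (intro exI[of _ "x # d"] exI[of _ s']) (auto simp: add.assoc)
  qed
qed simp

lemma not_meander_from_dyck_Dn:
  "meander_from 0 d \<Longrightarrow> height d = 0 \<Longrightarrow> \<not> meander_from 0 (d @ Dn # s)"
  by (simp add: meander_from_append) (use meander_from_nonneg in fastforce)

lemma inj_on_dyck_Dn_append: "inj_on (\<lambda>(d, s). d @ Dn # s) (plain_dyck_paths \<times> S)"
proof (rule inj_onI, clarify)
  fix d1 s1 d2 s2
  assume d: "d1 \<in> plain_dyck_paths" "d2 \<in> plain_dyck_paths" and eq: "d1 @ Dn # s1 = d2 @ Dn # s2"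
  have no_Dn_extension: "d' \<noteq> d @ Dn # us" if "d \<in> plain_dyck_paths" "d' \<in> plain_dyck_paths" for d d' us
    using that not_meander_from_dyck_Dn by (auto simp: plain_dyck_paths_def plain_meanders_def)
  obtain us where "d1 = d2 @ us \<and> us @ Dn # s1 = Dn # s2 \<or> d1 @ us = d2 \<and> Dn # s1 = us @ Dn # s2"
    using eq by (auto simp: append_eq_append_conv2)
  then show "d1 = d2 \<and> s1 = s2"
  proof (elim disjE conjE)
    assume "d1 = d2 @ us" "us @ Dn # s1 = Dn # s2"
    then show ?thesis
      using no_Dn_extension[OF d(2,1)] by (cases us) auto
  next
    assume "d1 @ us = d2" "Dn # s1 = us @ Dn # s2"
    then show ?thesis
      using no_Dn_extension[OF d(1,2)] by (cases us) auto
  qed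
qed

lemma plain_meanders_Suc_eq:
  "plain_meanders (Suc c)
     = plain_meanders 0 \<union> (\<lambda>(d, s). d @ Dn # s) ` (plain_dyck_paths \<times> plain_meanders c)"
proof (intro set_eqI iffI)
  fix s assume s: "s \<in> plain_meanders (Suc c)"
  show "s \<in> plain_meanders 0 \<union> (\<lambda>(d, s). d @ Dn # s) ` (plain_dyck_paths \<times> plain_meanders c)"
  proof (cases "meander_from 0 s")
    case False
    with s obtain d s' where ds: "s = d @ Dn # s'" "meander_from 0 d" "height d = 0"
      using first_passage_split[of 0 s] by (auto simp: plain_meanders_def)
    with s have "d \<in> plain_dyck_paths" "s' \<in> plain_meanders c"
      by (auto simp: plain_meanders_def plain_dyck_paths_def meander_from_append)
    with ds show ?thesis by auto
  qed (use s in \<open>auto simp: plain_meanders_def\<close>)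
next
  fix s assume "s \<in> plain_meanders 0 \<union> (\<lambda>(d, s). d @ Dn # s) ` (plain_dyck_paths \<times> plain_meanders c)"
  then show "s \<in> plain_meanders (Suc c)"
  proof
    assume "s \<in> plain_meanders 0"
    then show ?thesis
      using meander_from_mono[of 0 s "int (Suc c)"] by (simp add: plain_meanders_def)
  next
    assume "s \<in> (\<lambda>(d, s). d @ Dn # s) ` (plain_dyck_paths \<times> plain_meanders c)"
    then obtain d s' where "s = d @ Dn # s'" "d \<in> plain_dyck_paths" "s' \<in> plain_meanders c"
      by auto
    moreover have "meander_from (int (Suc c)) d"
      using \<open>d \<in> plain_dyck_paths\<close> meander_from_mono[of 0 d "int (Suc c)"]
      by (simp add: plain_dyck_paths_def plain_meanders_def)
    ultimately show ?thesis
      by (auto simp: plain_meanders_def plain_dyck_paths_def meander_from_append)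
  qed
qed

lemma has_sum_tail_gf_Suc_staying_above:
  assumes z: "norm z < 1/3" and u: "norm u \<le> 1"
  shows "(tail_monomial z u (Suc c) has_sum u ^ Suc c * tail_gf 0 z u) (plain_meanders 0)"
proof -
  have shift: "tail_monomial z u (Suc c) s = u ^ Suc c * tail_monomial z u 0 s"
    if "s \<in> plain_meanders 0" for s
  proof -
    from that have "height s \<ge> 0"
      using meander_from_height_nonneg by (force simp: plain_meanders_def)
    then have "nat (int (Suc c) + height s) = Suc c + nat (height s)" by simp
    then show ?thesis by (simp add: tail_monomial_def power_add)
  qed
  show ?thesis
    using has_sum_cmult_right[OF has_sum_tail_gf[OF z u, of 0], of "u ^ Suc c"]
    by (subst has_sum_cong[OF shift])
qed

lemma has_sum_tail_gf_Suc_first_passage: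
  assumes z: "norm z < 1/3" and u: "norm u \<le> 1"
  shows "(tail_monomial z u (Suc c) has_sum z * dyck_gf z * tail_gf c z u)
    ((\<lambda>(d, s). d @ Dn # s) ` (plain_dyck_paths \<times> plain_meanders c))"
proof -
  let ?I = "(\<lambda>(d, s). d @ Dn # s) ` (plain_dyck_paths \<times> plain_meanders c)"
  have summable: "tail_monomial z u (Suc c) summable_on ?I"
    using has_sum_imp_summable[OF has_sum_tail_gf[OF z u, of "Suc c"]]
    by (rule summable_on_subset_banach) (simp add: plain_meanders_Suc_eq)
  have by_prefix: "((\<lambda>d. z ^ length d * (z * tail_gf c z u))
      has_sum infsum (tail_monomial z u (Suc c)) ?I) plain_dyck_paths"
  proof (rule has_sum_reindex_Sigma_mult[OF inj_on_dyck_Dn_append summable])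
    show "tail_monomial z u (Suc c) ((\<lambda>(d, s). d @ Dn # s) (d, s))
        = z ^ length d * (z * tail_monomial z u c s)"
      if "d \<in> plain_dyck_paths" "s \<in> plain_meanders c" for d s
      using that by (simp add: plain_dyck_paths_def tail_monomial_def power_add)
    show "((\<lambda>s. z * tail_monomial z u c s) has_sum z * tail_gf c z u) (plain_meanders c)" for d
      by (rule has_sum_cmult_right[OF has_sum_tail_gf[OF z u]])
  qed
  have "((\<lambda>d. z ^ length d * (z * tail_gf c z u)) has_sum
      dyck_gf z * (z * tail_gf c z u)) plain_dyck_paths"
    by (rule has_sum_cmult_left[OF has_sum_dyck_gf[OF z]])
  from has_sum_unique[OF by_prefix this] show ?thesis
    using has_sum_infsum[OF summable] by (simp add: ac_simps)
qed

lemma tail_gf_Suc: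
  assumes z: "norm z < 1/3" and u: "norm u \<le> 1"
  shows "tail_gf (Suc c) z u = u ^ Suc c * tail_gf 0 z u + z * dyck_gf z * tail_gf c z u"
proof -
  have disjoint: "plain_meanders 0 \<inter> (\<lambda>(d, s). d @ Dn # s) ` (plain_dyck_paths \<times> plain_meanders c) = {}"
    using not_meander_from_dyck_Dn by (fastforce simp: plain_dyck_paths_def plain_meanders_def)
  have "(tail_monomial z u (Suc c) has_sum
      u ^ Suc c * tail_gf 0 z u + z * dyck_gf z * tail_gf c z u) (plain_meanders (Suc c))"
    unfolding plain_meanders_Suc_eq
    by (rule has_sum_Un_disjoint[OF has_sum_tail_gf_Suc_staying_above[OF z u]
          has_sum_tail_gf_Suc_first_passage[OF z u] disjoint])
  then show ?thesis
    using has_sum_unique[OF has_sum_tail_gf[OF z u, of "Suc c"]] by simp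
qed

lemma tail_gf_eq_sum:
  assumes "norm z < 1/3" "norm u \<le> 1"
  shows "tail_gf c z u = (\<Sum>m\<le>c. (z * dyck_gf z) ^ (c - m) * u ^ m) * tail_gf 0 z u"
proof (induction c)
  case (Suc c)
  have "tail_gf (Suc c) z u
      = (u ^ Suc c + (\<Sum>m\<le>c. (z * dyck_gf z) ^ (Suc c - m) * u ^ m)) * tail_gf 0 z u"
    unfolding tail_gf_Suc[OF assms] Suc
    by (simp add: sum_distrib_left algebra_simps Suc_diff_le)
  then show ?case
    by (simp add: add.commute)
qed simp

lemma tail_gf_0_equation:
  assumes "norm z < 1/3" "norm u \<le> 1"
  shows "tail_gf 0 z u * (1 - z * u - z * (z * dyck_gf z)) = 1"
proof -
  have "tail_gf 1 z u = (u + z * dyck_gf z) * tail_gf 0 z u"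
    using tail_gf_eq_sum[OF assms, of 1] by (simp add: algebra_simps)
  with tail_gf_0_eq[OF assms] show ?thesis
    by algebra
qed

lemma tail_gf_0_at_0: "tail_gf 0 z 0 = dyck_gf z"
  unfolding tail_gf_def dyck_gf_def
proof (rule infsum_cong_neutral)
  fix s assume "s \<in> plain_meanders 0 - plain_dyck_paths"
  then have "height s > 0"
    using meander_from_height_nonneg[of 0 s]
    by (auto simp: plain_dyck_paths_def plain_meanders_def)
  then show "tail_monomial z 0 0 s = 0"
    by (simp add: tail_monomial_def)
qed (auto simp: plain_dyck_paths_def tail_monomial_def)

lemma dyck_gf_equation:
  assumes "norm z < 1/3"
  shows "dyck_gf z * (1 - z\<^sup>2 * dyck_gf z) = 1"
  using tail_gf_0_equation[OF assms, of 0] by (simp add: tail_gf_0_at_0 power2_eq_square mult.assoc)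

lemma dyck_gf_eq_Dgf:
  assumes z0: "z \<noteq> 0" and z: "norm z < 1/4"
  shows "dyck_gf z = Dgf z"
proof -
  define D where "D = dyck_gf z"
  have "norm D \<le> 1 / (1 - 3 * norm z)"
    using norm_dyck_gf_le z by (simp add: D_def)
  also have "\<dots> < 4"
    using z by (simp add: field_simps)
  finally have D4: "norm D < 4" .
  have sq: "(2 * z\<^sup>2 * D - 1)\<^sup>2 = (csqrt (1 - 4 * z\<^sup>2))\<^sup>2"
    using dyck_gf_equation[of z] z by (simp add: D_def) algebra
  have "2 * z\<^sup>2 * D - 1 \<noteq> csqrt (1 - 4 * z\<^sup>2)"
  proof
    assume root: "2 * z\<^sup>2 * D - 1 = csqrt (1 - 4 * z\<^sup>2)"
    have "1 \<le> Re (2 * z\<^sup>2 * D)"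
      using Re_csqrt[of "1 - 4 * z\<^sup>2"] by (simp add: root [symmetric])
    also have "\<dots> \<le> 2 * norm z ^ 2 * norm D"
      using complex_Re_le_cmod[of "2 * z\<^sup>2 * D"] by (simp add: norm_mult norm_power)
    also have "\<dots> < 2 * ((1/4)^2 * 4)"
    proof -
      have "norm z ^ 2 < (1/4)^2"
        using z by (intro power_strict_mono) auto
      then have "norm z ^ 2 * norm D < (1/4)^2 * 4"
        using D4 by (intro mult_strict_mono) auto
      then show ?thesis by (simp add: mult.commute)
    qed
    finally show False by (simp add: power2_eq_square)
  qed
  with sq have "2 * z\<^sup>2 * D - 1 = - csqrt (1 - 4 * z\<^sup>2)"
    using power2_eq_iff by blast
  with z0 show ?thesis
    by (simp add: D_def Dgf_def field_simps)
qed

lemma z_dyck_gf_eq_Egf: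
  assumes "z \<noteq> 0" "norm z < 1/4"
  shows "z * dyck_gf z = Egf z"
  using assms by (simp add: dyck_gf_eq_Dgf Dgf_def Egf_def power2_eq_square)

lemma norm_z_dyck_gf_less_1:
  assumes "norm z < 1/4"
  shows "norm (z * dyck_gf z) < 1"
proof -
  have "norm (z * dyck_gf z) \<le> norm z * (1 / (1 - 3 * norm z))"
    unfolding norm_mult using assms by (intro mult_left_mono norm_dyck_gf_le) auto
  also have "\<dots> < 1"
    using assms by (simp add: field_simps)
  finally show ?thesis .
qed

lemma Mup_eq_tail_gf:
  assumes z0: "z \<noteq> 0" and z: "norm z < 1/4" and u: "norm u \<le> 1"
  shows "Mup z u = z * u * tail_gf 0 z u"
proof -
  define E where "E = z * dyck_gf z"
  have z3: "norm z < 1/3" using z by simp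
  have "E = z + z * E\<^sup>2"
    using dyck_gf_equation[OF z3] unfolding E_def by algebra
  then have "z * u * tail_gf 0 z u * (1 - u * E) = u * E * (tail_gf 0 z u * (1 - z * u - z * E))"
    by algebra
  also have "\<dots> = u * E"
    using tail_gf_0_equation[OF z3 u] by (simp add: E_def)
  finally have *: "z * u * tail_gf 0 z u * (1 - u * E) = u * E" .
  have "norm (u * E) \<le> norm E"
    using u by (simp add: norm_mult mult_left_le_one_le)
  then have "norm (u * E) < 1"
    using norm_z_dyck_gf_less_1[OF z] by (simp add: E_def)
  then have "1 - u * E \<noteq> 0" by auto
  with * have "z * u * tail_gf 0 z u = u * E / (1 - u * E)"
    by (simp add: eq_divide_eq)
  then show ?thesis
    using z_dyck_gf_eq_Egf[OF z0 z] by (simp add: Mup_def E_def)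
qed

section \<open>Meanders cut at their last U2 step\<close>

definition meanders_num_U2 :: "nat \<Rightarrow> step list set" where
  "meanders_num_U2 j = {xs. meander xs \<and> num_U2 xs = j}"

definition meanders_last_U2 :: "nat \<Rightarrow> step list set" where
  "meanders_last_U2 j = {xs \<in> meanders_num_U2 j. xs \<noteq> [] \<and> last xs = U2}"

definition path_monomial :: "complex \<Rightarrow> complex \<Rightarrow> step list \<Rightarrow> complex" where
  "path_monomial z u xs = of_nat (weight xs) * z ^ length xs * u ^ nat (height xs)"

definition path_gf :: "step list set \<Rightarrow> complex \<Rightarrow> complex \<Rightarrow> complex" where
  "path_gf S z u = infsum (path_monomial z u) S"

lemma has_sum_path_gf:
  assumes "norm z < 1/3" "norm u \<le> 1" "\<And>xs. xs \<in> S \<Longrightarrow> num_U2 xs = j"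
  shows "(path_monomial z u has_sum path_gf S z u) S"
proof -
  have "norm (path_monomial z u xs) \<le> 2 ^ j * (real (length xs) ^ j * norm z ^ length xs)"
    if "xs \<in> S" for xs
  proof -
    have "norm (path_monomial z u xs) \<le> real (weight xs) * norm z ^ length xs"
      using assms(2) by (simp add: path_monomial_def norm_mult norm_power mult_left_le power_le_one)
    also have "\<dots> \<le> real ((2 * length xs) ^ j) * norm z ^ length xs"
    proof -
      have "real (weight xs) \<le> real ((2 * length xs) ^ j)"
        using weight_le[of xs] assms(3)[OF that] by (simp only: of_nat_le_iff)
      then show ?thesis by (rule mult_right_mono) simp
    qed
    finally show ?thesis
      by (simp add: power_mult_distrib)
  qed
  then have "(\<lambda>xs. norm (path_monomial z u xs)) summable_on S"
    using assms(1) by (intro abs_summable_on_lists_if_norm_le[where r = "norm z" and C = "2 ^ j"])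
      (simp_all add: card_UNIV_step)
  then show ?thesis
    unfolding path_gf_def by (rule has_sum_infsum[OF abs_summable_summable])
qed

lemma path_monomial_snoc_U2:
  assumes "meander q"
  shows "path_monomial z u (q @ [U2]) = of_nat (length q + num_U2 q + 1) * z * u * path_monomial z u q"
proof -
  have "nat (height q + 1) = Suc (nat (height q))"
    using meander_height_nonneg[OF assms] by simp
  then show ?thesis
    by (simp add: path_monomial_def weight_snoc_U2 algebra_simps)
qed

lemma meanders_last_U2_Suc: "meanders_last_U2 (Suc j) = (\<lambda>q. q @ [U2]) ` meanders_num_U2 j"
proof (intro set_eqI iffI)
  fix xs assume xs: "xs \<in> meanders_last_U2 (Suc j)"
  then have "xs \<noteq> []" "last xs = U2"
    by (simp_all add: meanders_last_U2_def)
  then obtain q where q: "xs = q @ [U2]"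
    by (metis append_butlast_last_id)
  with xs have "q \<in> meanders_num_U2 j"
    by (simp add: meanders_last_U2_def meanders_num_U2_def meander_iff_meander_from
        meander_from_append)
  with q show "xs \<in> (\<lambda>q. q @ [U2]) ` meanders_num_U2 j" by blast
next
  fix xs assume "xs \<in> (\<lambda>q. q @ [U2]) ` meanders_num_U2 j"
  then obtain q where "xs = q @ [U2]" "meander q" "num_U2 q = j"
    by (auto simp: meanders_num_U2_def)
  then show "xs \<in> meanders_last_U2 (Suc j)"
    using meander_height_nonneg[of q]
    by (auto simp: meanders_last_U2_def meanders_num_U2_def meander_iff_meander_from meander_from_append)
qed

lemma meanders_num_U2_0: "meanders_num_U2 0 = plain_meanders 0"
  by (auto simp: meanders_num_U2_def plain_meanders_def meander_iff_meander_from num_U2_eq_0_iff)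

lemma path_gf_meanders_num_U2_0: "path_gf (meanders_num_U2 0) z u = tail_gf 0 z u"
  unfolding path_gf_def tail_gf_def meanders_num_U2_0
  by (intro infsum_cong) (auto simp: path_monomial_def tail_monomial_def plain_meanders_def weight_no_U2)

lemma takeWhile_rev_append_last_U2:
  assumes "p \<noteq> []" "last p = U2" "U2 \<notin> set s"
  shows "takeWhile (\<lambda>x. x \<noteq> U2) (rev (p @ s)) = rev s"
proof -
  obtain q where "p = q @ [U2]"
    using assms(1,2) by (cases p rule: rev_cases) auto
  moreover have "takeWhile (\<lambda>x. x \<noteq> U2) (rev s @ ys) = rev s @ takeWhile (\<lambda>x. x \<noteq> U2) ys"
    for ys
    by (rule takeWhile_append2) (use assms(3) in auto)
  ultimately show ?thesis by simp
qed

lemma inj_on_append_tail: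
  "inj_on (\<lambda>(p, s). p @ s) (SIGMA p:meanders_last_U2 j. plain_meanders (nat (height p)))"
proof (rule inj_onI, clarify)
  fix p1 s1 p2 s2
  assume p1: "p1 \<in> meanders_last_U2 j" "s1 \<in> plain_meanders (nat (height p1))"
    and p2: "p2 \<in> meanders_last_U2 j" "s2 \<in> plain_meanders (nat (height p2))"
    and eq: "p1 @ s1 = p2 @ s2"
  have "takeWhile (\<lambda>x. x \<noteq> U2) (rev (p1 @ s1)) = rev s1"
    using p1 by (intro takeWhile_rev_append_last_U2) (simp_all add: meanders_last_U2_def plain_meanders_def)
  moreover have "takeWhile (\<lambda>x. x \<noteq> U2) (rev (p2 @ s2)) = rev s2"
    using p2 by (intro takeWhile_rev_append_last_U2) (simp_all add: meanders_last_U2_def plain_meanders_def)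
  ultimately have "s1 = s2"
    by (simp only: eq rev_is_rev_conv)
  with eq show "p1 = p2 \<and> s1 = s2" by simp
qed

lemma meanders_num_U2_eq_last_U2_tails:
  assumes "j \<ge> 1"
  shows "meanders_num_U2 j
    = (\<lambda>(p, s). p @ s) ` (SIGMA p:meanders_last_U2 j. plain_meanders (nat (height p)))"
proof (intro set_eqI iffI)
  fix xs assume xs: "xs \<in> meanders_num_U2 j"
  with assms have "num_U2 xs \<noteq> 0"
    by (simp add: meanders_num_U2_def)
  then have "U2 \<in> set xs"
    by (simp add: num_U2_eq_0_iff)
  then obtain p s where ps: "xs = (p @ [U2]) @ s" "U2 \<notin> set s"
    by (metis split_list_last append_assoc append_Cons append_Nil)
  with xs have m: "meander_from 0 (p @ [U2])" "meander_from (height (p @ [U2])) s"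
    by (simp_all add: meanders_num_U2_def meander_iff_meander_from meander_from_append)
  then have "height (p @ [U2]) \<ge> 0"
    using meander_from_height_nonneg by fastforce
  with m ps have "s \<in> plain_meanders (nat (height (p @ [U2])))"
    by (simp add: plain_meanders_def)
  moreover have "num_U2 s = 0"
    using ps(2) by (simp add: num_U2_eq_0_iff)
  with xs ps m have "p @ [U2] \<in> meanders_last_U2 j"
    by (simp add: meanders_last_U2_def meanders_num_U2_def meander_iff_meander_from)
  ultimately show "xs \<in> (\<lambda>(p, s). p @ s) ` (SIGMA p:meanders_last_U2 j. plain_meanders (nat (height p)))"
    using ps(1) by (intro rev_image_eqI[of "(p @ [U2], s)"]) simp_all
next
  fix xs assume "xs \<in> (\<lambda>(p, s). p @ s) ` (SIGMA p:meanders_last_U2 j. plain_meanders (nat (height p)))"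
  then obtain p s where ps: "xs = p @ s" "p \<in> meanders_last_U2 j" "s \<in> plain_meanders (nat (height p))"
    by auto
  then have "height p \<ge> 0" "meander_from 0 p" "num_U2 p = j"
    using meander_height_nonneg
    by (auto simp: meanders_last_U2_def meanders_num_U2_def meander_iff_meander_from)
  moreover have "num_U2 s = 0" "meander_from (height p) s"
    using ps(3) \<open>height p \<ge> 0\<close> by (simp_all add: plain_meanders_def num_U2_eq_0_iff)
  ultimately show "xs \<in> meanders_num_U2 j"
    using ps(1) by (simp add: meanders_num_U2_def meander_iff_meander_from meander_from_append)
qed

lemma path_monomial_append_tail:
  assumes "p \<in> meanders_last_U2 j" "s \<in> plain_meanders (nat (height p))"
  shows "path_monomial z u (p @ s) = (of_nat (weight p) * z ^ length p) * tail_monomial z u (nat (height p)) s"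
proof -
  have "height p \<ge> 0"
    using assms by (auto simp: meanders_last_U2_def meanders_num_U2_def meander_height_nonneg)
  moreover have "U2 \<notin> set s"
    using assms by (simp add: plain_meanders_def)
  ultimately show ?thesis
    by (simp add: path_monomial_def tail_monomial_def weight_append_no_U2 power_add)
qed

lemma has_sum_meanders_num_U2_by_last_U2:
  assumes z: "norm z < 1/3" and u: "norm u \<le> 1" and j: "j \<ge> 1"
  shows "((\<lambda>p. of_nat (weight p) * z ^ length p * tail_gf (nat (height p)) z u)
           has_sum path_gf (meanders_num_U2 j) z u) (meanders_last_U2 j)"
proof -
  let ?Sigma = "SIGMA p:meanders_last_U2 j. plain_meanders (nat (height p))"
  have "(path_monomial z u has_sum path_gf (meanders_num_U2 j) z u) (meanders_num_U2 j)"
    by (rule has_sum_path_gf[OF z u]) (simp add: meanders_num_U2_def)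
  then have summable: "path_monomial z u summable_on (\<lambda>(p, s). p @ s) ` ?Sigma"
    unfolding meanders_num_U2_eq_last_U2_tails[OF j] by (rule has_sum_imp_summable)
  have "((\<lambda>p. of_nat (weight p) * z ^ length p * tail_gf (nat (height p)) z u)
      has_sum infsum (path_monomial z u) ((\<lambda>(p, s). p @ s) ` ?Sigma)) (meanders_last_U2 j)"
  proof (rule has_sum_reindex_Sigma_mult[OF inj_on_append_tail summable])
    show "path_monomial z u ((\<lambda>(p, s). p @ s) (p, s))
        = of_nat (weight p) * z ^ length p * tail_monomial z u (nat (height p)) s"
      if "p \<in> meanders_last_U2 j" "s \<in> plain_meanders (nat (height p))" for p s
      using path_monomial_append_tail[OF that] by simp
    show "(tail_monomial z u (nat (height p)) has_sum tail_gf (nat (height p)) z u)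
        (plain_meanders (nat (height p)))" for p
      by (rule has_sum_tail_gf[OF z u])
  qed
  then show ?thesis
    unfolding path_gf_def meanders_num_U2_eq_last_U2_tails[OF j] .
qed

lemma geometric_kernel_identity:
  fixes u e :: "'a::comm_ring_1"
  shows "(u - e) * (\<Sum>m\<le>c. e ^ (c - m) * u ^ m) = u * u ^ c - e * e ^ c"
  using diff_power_eq_sum[of u c e] by (simp add: lessThan_Suc_atMost mult.commute)

lemma kernel_term_eq:
  assumes "norm z < 1/3" "norm u \<le> 1"
  defines "E \<equiv> z * dyck_gf z"
  shows "(u * path_monomial z u p - E * path_monomial z E p) * tail_gf 0 z u
    = (u - E) * (of_nat (weight p) * z ^ length p * tail_gf (nat (height p)) z u)"
proof -
  let ?c = "nat (height p)"
  have "(u - E) * tail_gf ?c z u = (u * u ^ ?c - E * E ^ ?c) * tail_gf 0 z u"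
    unfolding tail_gf_eq_sum[OF assms(1,2), of ?c] E_def
    by (simp only: mult.assoc [symmetric] geometric_kernel_identity)
  moreover have "u * path_monomial z u p - E * path_monomial z E p
      = of_nat (weight p) * z ^ length p * (u * u ^ ?c - E * E ^ ?c)"
    by (simp add: path_monomial_def algebra_simps)
  ultimately show ?thesis
    by (simp add: ac_simps)
qed

lemma path_gf_meanders_num_U2_kernel:
  assumes z: "norm z < 1/3" and u: "norm u \<le> 1" and E: "norm (z * dyck_gf z) \<le> 1"
    and j: "j \<ge> 1"
  defines "E \<equiv> z * dyck_gf z"
  shows "(u - E) * path_gf (meanders_num_U2 j) z u
    = (u * path_gf (meanders_last_U2 j) z u - E * path_gf (meanders_last_U2 j) z E) * tail_gf 0 z u"
proof -
  let ?P = "meanders_last_U2 j"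
  have last_U2: "xs \<in> ?P \<Longrightarrow> num_U2 xs = j" for xs
    by (simp add: meanders_last_U2_def meanders_num_U2_def)
  have "((\<lambda>p. u * path_monomial z u p - E * path_monomial z E p)
      has_sum (u * path_gf ?P z u - E * path_gf ?P z E)) ?P"
    by (intro has_sum_diff has_sum_cmult_right has_sum_path_gf[OF z u last_U2]
        has_sum_path_gf[OF z E[folded E_def] last_U2])
  then have "((\<lambda>p. (u * path_monomial z u p - E * path_monomial z E p) * tail_gf 0 z u)
      has_sum (u * path_gf ?P z u - E * path_gf ?P z E) * tail_gf 0 z u) ?P"
    by (rule has_sum_cmult_left)
  then have "((\<lambda>p. (u - E) * (of_nat (weight p) * z ^ length p * tail_gf (nat (height p)) z u))
      has_sum (u * path_gf ?P z u - E * path_gf ?P z E) * tail_gf 0 z u) ?P"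
    by (simp only: kernel_term_eq[OF z u, folded E_def])
  moreover have "((\<lambda>p. (u - E) * (of_nat (weight p) * z ^ length p * tail_gf (nat (height p)) z u))
      has_sum (u - E) * path_gf (meanders_num_U2 j) z u) ?P"
    by (rule has_sum_cmult_right[OF has_sum_meanders_num_U2_by_last_U2[OF z u j]])
  ultimately show ?thesis
    by (rule has_sum_unique[symmetric])
qed

lemma finite_length_fiber: "finite {xs \<in> (S :: step list set). length xs = n}"
  by (rule finite_subset[OF _ finite_lists_of_length[of n]]) auto

lemma Fgf_eq_path_gf:
  assumes "k \<ge> 1" "norm z < 1/3" "norm u \<le> 1"
  shows "Fgf k z u = path_gf (meanders_last_U2 k) z u"
proof -
  let ?P = "meanders_last_U2 k"
  have "(\<Sum>xs\<in>{xs \<in> ?P. length xs = n}. path_monomial z u xs)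
      = (\<Sum>l\<le>n. of_nat (fcoef k n l) * z ^ n * u ^ l)" for n
  proof -
    let ?A = "{xs \<in> ?P. length xs = n}"
    have "nat (height xs) \<in> {..n}" if "xs \<in> ?A" for xs
      using that height_le_length[of xs] by (auto simp: nat_le_iff)
    then have "(\<Sum>xs\<in>?A. path_monomial z u xs)
        = (\<Sum>l\<le>n. \<Sum>xs\<in>{xs \<in> ?A. nat (height xs) = l}. path_monomial z u xs)"
      by (intro sum.group[symmetric] finite_length_fiber) auto
    also have "\<dots> = (\<Sum>l\<le>n. of_nat (fcoef k n l) * z ^ n * u ^ l)"
    proof (rule sum.cong[OF refl])
      fix l
      have "{xs \<in> ?A. nat (height xs) = l} = {xs\<in>paths_len n. meander xs \<and> num_U2 xs = k
          \<and> xs \<noteq> [] \<and> last xs = U2 \<and> height xs = int l}"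
        by (auto simp: meanders_last_U2_def meanders_num_U2_def paths_len_eq
            dest: meander_height_nonneg)
      moreover have "(\<Sum>xs\<in>{xs \<in> ?A. nat (height xs) = l}. path_monomial z u xs)
          = (\<Sum>xs\<in>{xs \<in> ?A. nat (height xs) = l}. of_nat (weight xs) * z ^ n * u ^ l)"
        by (rule sum.cong) (auto simp: path_monomial_def)
      ultimately show "(\<Sum>xs\<in>{xs \<in> ?A. nat (height xs) = l}. path_monomial z u xs)
          = of_nat (fcoef k n l) * z ^ n * u ^ l"
        by (simp add: fcoef_def sum_distrib_right)
    qed
    finally show ?thesis .
  qed
  moreover have "(path_monomial z u has_sum path_gf ?P z u) ?P"
    by (rule has_sum_path_gf[OF assms(2,3)]) (simp add: meanders_last_U2_def meanders_num_U2_def)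
  then have "(\<lambda>n. \<Sum>xs\<in>{xs \<in> ?P. length xs = n}. path_monomial z u xs) sums path_gf ?P z u"
    unfolding path_gf_def by (intro sums_length_fibers has_sum_imp_summable)
  ultimately show ?thesis
    using assms(1) by (simp add: Fgf_def sums_iff)
qed

lemma Bgf_eq_path_gf:
  assumes "norm z < 1/3"
  shows "Bgf k z = path_gf (meanders_num_U2 k) z 0"
proof -
  let ?Q = "meanders_num_U2 k"
  have "(\<Sum>xs\<in>{xs \<in> ?Q. length xs = n}. path_monomial z 0 xs) = of_nat (bcoef k n) * z ^ n" for n
  proof -
    let ?A = "{xs \<in> ?Q. length xs = n}"
    have "(\<Sum>xs\<in>?A. path_monomial z 0 xs) = (\<Sum>xs\<in>?A. if height xs = 0 then of_nat (weight xs) * z ^ n else 0)"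
      by (rule sum.cong) (auto simp: path_monomial_def meanders_num_U2_def dest: meander_height_nonneg)
    also have "\<dots> = (\<Sum>xs\<in>{xs \<in> ?A. height xs = 0}. of_nat (weight xs) * z ^ n)"
      by (rule sum.inter_filter[symmetric]) (rule finite_length_fiber)
    also have "{xs \<in> ?A. height xs = 0} = {xs\<in>paths_len n. meander xs \<and> num_U2 xs = k \<and> height xs = 0}"
      by (auto simp: meanders_num_U2_def paths_len_eq)
    finally show ?thesis
      by (simp add: bcoef_def sum_distrib_right)
  qed
  moreover have "(path_monomial z 0 has_sum path_gf ?Q z 0) ?Q"
    by (rule has_sum_path_gf[OF assms]) (simp_all add: meanders_num_U2_def)
  then have "(\<lambda>n. \<Sum>xs\<in>{xs \<in> ?Q. length xs = n}. path_monomial z 0 xs) sums path_gf ?Q z 0"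
    unfolding path_gf_def by (intro sums_length_fibers has_sum_imp_summable)
  ultimately show ?thesis
    by (simp add: Bgf_def sums_iff)
qed

lemma Bgf_eq_Fgf_Egf:
  assumes z0: "z \<noteq> 0" and z: "norm z < 1/4"
  shows "Bgf k z = Fgf k z (Egf z) * Dgf z"
proof (cases "k = 0")
  case True
  then show ?thesis
    using z0 z by (simp add: Bgf_eq_path_gf path_gf_meanders_num_U2_0 tail_gf_0_at_0 dyck_gf_eq_Dgf Fgf_def)
next
  case False
  define E where "E = z * dyck_gf z"
  have z3: "norm z < 1/3" using z by simp
  have E1: "norm E \<le> 1"
    using norm_z_dyck_gf_less_1[OF z] by (simp add: E_def)
  have "dyck_gf z \<noteq> 0"
    using dyck_gf_equation[OF z3] by auto
  with z0 have "E \<noteq> 0" by (simp add: E_def)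
  from path_gf_meanders_num_U2_kernel[OF z3 _ E1[unfolded E_def], of 0 k] False
  have "- E * path_gf (meanders_num_U2 k) z 0 = - E * (path_gf (meanders_last_U2 k) z E * dyck_gf z)"
    by (simp add: E_def tail_gf_0_at_0)
  with \<open>E \<noteq> 0\<close> have "path_gf (meanders_num_U2 k) z 0 = path_gf (meanders_last_U2 k) z E * dyck_gf z"
    by simp
  then show ?thesis
    using False Fgf_eq_path_gf[OF _ z3 E1, of k] z_dyck_gf_eq_Egf[OF z0 z] dyck_gf_eq_Dgf[OF z0 z]
    by (simp add: Bgf_eq_path_gf[OF z3] E_def)
qed

section \<open>The derivative formula\<close>

lemma sums_deriv_power_times_power_series:
  fixes a :: "nat \<Rightarrow> 'a::{real_normed_field,banach}"
  assumes summable: "\<And>w. norm w < R \<Longrightarrow> summable (\<lambda>n. a n * w ^ n)" and z: "norm z < R"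
  shows "(\<lambda>n. of_nat (n + Suc m) * a n * z ^ (n + m))
           sums deriv (\<lambda>w. w ^ Suc m * (\<Sum>n. a n * w ^ n)) z"
proof -
  define P where "P w = (\<Sum>n. a n * w ^ n)" for w
  define P' where "P' = (\<Sum>n. diffs a n * z ^ n)"
  have "(P has_field_derivative P') (at z)"
    unfolding P_def[abs_def] P'_def by (rule termdiffs_strong'[OF summable z])
  moreover have "((\<lambda>w. w ^ Suc m) has_field_derivative of_nat (Suc m) * z ^ m) (at z)"
    using DERIV_power_Suc[OF DERIV_ident, where n = m and x = z and s = UNIV] by simp
  ultimately have "((\<lambda>w. w ^ Suc m * P w) has_field_derivative
      of_nat (Suc m) * z ^ m * P z + P' * z ^ Suc m) (at z)"
    using DERIV_mult by blast
  then have deriv: "deriv (\<lambda>w. w ^ Suc m * P w) z = of_nat (Suc m) * z ^ m * P z + z ^ Suc m * P'"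
    by (simp add: DERIV_imp_deriv mult.commute)
  have "(\<lambda>n. a n * z ^ n) sums P z"
    unfolding P_def using summable[OF z] by (rule summable_sums)
  then have "(\<lambda>n. a n * z ^ n * (of_nat (Suc m) * z ^ m)) sums (P z * (of_nat (Suc m) * z ^ m))"
    by (rule sums_mult2)
  then have low: "(\<lambda>n. of_nat (Suc m) * a n * z ^ (n + m)) sums (of_nat (Suc m) * z ^ m * P z)"
    by (simp add: power_add ac_simps)
  have "(\<lambda>n. diffs a n * z ^ n) sums P'"
    unfolding P'_def by (intro summable_sums termdiff_converges[OF z summable])
  then have "(\<lambda>n. diffs a n * z ^ n * z ^ Suc m) sums (P' * z ^ Suc m)"
    by (rule sums_mult2)
  then have "(\<lambda>n. of_nat (Suc n) * a (Suc n) * z ^ (Suc n + m)) sums (z ^ Suc m * P')"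
    by (simp add: diffs_def power_add ac_simps)
  then have high: "(\<lambda>n. of_nat n * a n * z ^ (n + m)) sums (z ^ Suc m * P')"
    by (subst (asm) sums_Suc_iff) simp
  from sums_add[OF high low] show ?thesis
    unfolding P_def[symmetric] deriv by (simp add: algebra_simps)
qed

definition meander_coeff :: "nat \<Rightarrow> complex \<Rightarrow> nat \<Rightarrow> complex" where
  "meander_coeff j u n = (\<Sum>q\<in>{q \<in> meanders_num_U2 j. length q = n}. path_monomial 1 u q)"

lemma path_monomial_eq_scaled: "path_monomial z u q = path_monomial 1 u q * z ^ length q"
  by (simp add: path_monomial_def)

lemma meander_coeff_sums:
  assumes "norm w < 1/3" "norm u \<le> 1"
  shows "(\<lambda>n. meander_coeff j u n * w ^ n) sums path_gf (meanders_num_U2 j) w u"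
proof -
  have "(path_monomial w u has_sum path_gf (meanders_num_U2 j) w u) (meanders_num_U2 j)"
    by (rule has_sum_path_gf[OF assms]) (simp add: meanders_num_U2_def)
  then have "(\<lambda>n. \<Sum>q\<in>{q \<in> meanders_num_U2 j. length q = n}. path_monomial w u q)
      sums path_gf (meanders_num_U2 j) w u"
    unfolding path_gf_def by (intro sums_length_fibers has_sum_imp_summable)
  moreover have "(\<Sum>q\<in>{q \<in> meanders_num_U2 j. length q = n}. path_monomial w u q)
      = meander_coeff j u n * w ^ n" for n
    unfolding meander_coeff_def sum_distrib_right
    by (rule sum.cong) (simp_all add: path_monomial_eq_scaled[of w])
  ultimately show ?thesis by simp
qed

lemma Fgf_Suc_sums:
  assumes z: "norm z < 1/3" and u: "norm u \<le> 1"
  shows "(\<lambda>n. of_nat (n + Suc j) * (u * meander_coeff j u n) * z ^ (n + 1)) sums Fgf (Suc j) z u"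
proof -
  let ?g = "\<lambda>q. path_monomial z u (q @ [U2])"
  have "(path_monomial z u has_sum path_gf (meanders_last_U2 (Suc j)) z u) (meanders_last_U2 (Suc j))"
    by (rule has_sum_path_gf[OF z u]) (simp add: meanders_last_U2_def meanders_num_U2_def)
  then have "(path_monomial z u has_sum Fgf (Suc j) z u) ((\<lambda>q. q @ [U2]) ` meanders_num_U2 j)"
    using Fgf_eq_path_gf[of "Suc j" z u] z u by (simp add: meanders_last_U2_Suc)
  then have "(?g has_sum Fgf (Suc j) z u) (meanders_num_U2 j)"
    by (subst (asm) has_sum_reindex) (auto simp: inj_on_def o_def)
  then have "(\<lambda>n. \<Sum>q\<in>{q \<in> meanders_num_U2 j. length q = n}. ?g q) sums Fgf (Suc j) z u"
    by (intro has_sum_imp_sums has_sum_length_fibers)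
  moreover have "(\<Sum>q\<in>{q \<in> meanders_num_U2 j. length q = n}. ?g q)
      = of_nat (n + Suc j) * (u * meander_coeff j u n) * z ^ (n + 1)" for n
  proof -
    have "(\<Sum>q\<in>{q \<in> meanders_num_U2 j. length q = n}. ?g q)
        = (\<Sum>q\<in>{q \<in> meanders_num_U2 j. length q = n}.
            of_nat (n + Suc j) * u * z ^ (n + 1) * path_monomial 1 u q)"
      by (rule sum.cong) (auto simp: meanders_num_U2_def path_monomial_snoc_U2
          path_monomial_eq_scaled[of z] algebra_simps)
    then show ?thesis
      by (simp add: meander_coeff_def sum_distrib_left ac_simps)
  qed
  ultimately show ?thesis by simp
qed

lemma kernel_equation:
  assumes z0: "z \<noteq> 0" and z: "norm z < 1/4" and u: "norm u \<le> 1"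
  shows "(u - Egf z) * path_gf (meanders_num_U2 j) z u
    = (u * Fgf j z u - Egf z * Fgf j z (Egf z)) * tail_gf 0 z u"
proof (cases "j = 0")
  case True
  then show ?thesis
    by (simp add: Fgf_def path_gf_meanders_num_U2_0)
next
  case False
  have z3: "norm z < 1/3" using z by simp
  have E1: "norm (z * dyck_gf z) \<le> 1"
    using norm_z_dyck_gf_less_1[OF z] by simp
  with False show ?thesis
    using path_gf_meanders_num_U2_kernel[OF z3 u E1, of j] Fgf_eq_path_gf[OF _ z3 u, of j]
      Fgf_eq_path_gf[OF _ z3 E1, of j] z_dyck_gf_eq_Egf[OF z0 z]
    by simp
qed

lemma eventually_near_Egf_neq:
  assumes "z \<noteq> 0" "norm z < 1/4" "Egf z \<noteq> u"
  shows "\<forall>\<^sub>F w in nhds z. w \<noteq> 0 \<and> norm w < 1/4 \<and> Egf w \<noteq> u"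
proof -
  have "Re (4 * z\<^sup>2) \<le> 4 * norm z ^ 2"
    using complex_Re_le_cmod[of "4 * z\<^sup>2"] by (simp add: norm_mult norm_power)
  also have "\<dots> < 1"
    using assms(2) power_strict_mono[of "norm z" "1/4" 2] by (simp add: power_divide)
  finally have "1 - 4 * z\<^sup>2 \<notin> \<real>\<^sub>\<le>\<^sub>0"
    by (auto simp: complex_nonpos_Reals_iff)
  with assms(1) have "isCont Egf z"
    unfolding Egf_def[abs_def] by (intro continuous_intros isCont_csqrt') auto
  then have "(Egf \<longlongrightarrow> Egf z) (nhds z)"
    by (simp add: tendsto_nhds_iff isCont_def)
  moreover have "((\<lambda>w. w) \<longlongrightarrow> z) (nhds z)" "((\<lambda>w. norm w) \<longlongrightarrow> norm z) (nhds z)"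
    by (auto intro!: tendsto_intros simp: tendsto_nhds_iff)
  ultimately show ?thesis
    using assms by (intro eventually_conj tendsto_imp_eventually_ne order_tendstoD(2)) auto
qed

lemma kernel_quotient_times_Mup:
  assumes "w \<noteq> 0" "norm w < 1/4" "norm u \<le> 1" "Egf w \<noteq> u"
  shows "w ^ j * ((u * Fgf j w u - Egf w * Fgf j w (Egf w)) / (u - Egf w)) * Mup w u
    = w ^ Suc j * (u * path_gf (meanders_num_U2 j) w u)"
proof -
  let ?X = "u * Fgf j w u - Egf w * Fgf j w (Egf w)"
  have ne: "u - Egf w \<noteq> 0"
    using assms(4) by simp
  have G: "path_gf (meanders_num_U2 j) w u = ?X * tail_gf 0 w u / (u - Egf w)"
    using kernel_equation[OF assms(1-3), of j] ne by (simp add: eq_divide_eq ac_simps)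
  have "Mup w u = w * u * tail_gf 0 w u"
    using Mup_eq_tail_gf[OF assms(1-3)] by simp
  then have "w ^ j * (?X / (u - Egf w)) * Mup w u = w ^ Suc j * (u * (?X * tail_gf 0 w u / (u - Egf w)))"
    using ne by (simp add: field_simps)
  then show ?thesis
    unfolding G .
qed

lemma power_int_pred_mult_power:
  fixes z :: "'a::field"
  assumes "z \<noteq> 0"
  shows "z powi (int j - 1) * z ^ Suc n = z ^ (n + j)"
proof -
  have "z powi (int j - 1) * z powi int (Suc n) = z powi (int j - 1 + int (Suc n))"
    using assms by (rule power_int_add[symmetric, OF disjI1])
  then show ?thesis
    by (simp add: algebra_simps flip: power_int_of_nat)
qed

lemma Fgf_eq_deriv:
  assumes k: "k \<ge> 1" and z0: "z \<noteq> 0" and z: "norm z < 1/4" and u: "norm u < 1"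
    and ue: "u \<noteq> Egf z"
  shows "Fgf k z u = (1 / z powi (int k - 2)) *
    deriv (\<lambda>w. w powi (int k - 1) *
      ((u * Fgf (k - 1) w u - Egf w * Fgf (k - 1) w (Egf w)) / (u - Egf w)) * Mup w u) z"
proof -
  obtain j where k_eq: "k = Suc j"
    using k by (cases k) auto
  define a where "a n = u * meander_coeff j u n" for n
  let ?lhs = "\<lambda>w. w powi (int k - 1) *
    ((u * Fgf (k - 1) w u - Egf w * Fgf (k - 1) w (Egf w)) / (u - Egf w)) * Mup w u"
  have u1: "norm u \<le> 1" using u by simp
  have sums_a: "(\<lambda>n. a n * w ^ n) sums (u * path_gf (meanders_num_U2 j) w u)" if "norm w < 1/3" for w
    using sums_mult[OF meander_coeff_sums[OF that u1], of u] by (simp add: a_def mult.assoc)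
  have near: "?lhs w = w ^ Suc j * (\<Sum>n. a n * w ^ n)"
    if "w \<noteq> 0 \<and> norm w < 1/4 \<and> Egf w \<noteq> u" for w
    using that kernel_quotient_times_Mup[of w u j] sums_a[of w] u1 by (simp add: k_eq sums_iff)
  have "\<forall>\<^sub>F w in nhds z. w \<noteq> 0 \<and> norm w < 1/4 \<and> Egf w \<noteq> u"
    using eventually_near_Egf_neq[OF z0 z] ue by simp
  then have deriv_eq: "deriv ?lhs z = deriv (\<lambda>w. w ^ Suc j * (\<Sum>n. a n * w ^ n)) z"
    by (intro deriv_cong_ev[OF _ refl]) (rule eventually_mono, assumption, rule near)
  have "(\<lambda>n. of_nat (n + Suc j) * a n * z ^ (n + j))
      sums deriv (\<lambda>w. w ^ Suc j * (\<Sum>n. a n * w ^ n)) z"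
    using sums_summable[OF sums_a] z
    by (intro sums_deriv_power_times_power_series[where R = "1/3"]) auto
  then have "(\<lambda>n. 1 / z powi (int k - 2) * (of_nat (n + Suc j) * a n * z ^ (n + j)))
      sums (1 / z powi (int k - 2) * deriv ?lhs z)"
    unfolding deriv_eq by (rule sums_mult)
  moreover have "1 / z powi (int k - 2) * (of_nat (n + Suc j) * a n * z ^ (n + j))
      = of_nat (n + k) * a n * z ^ (n + 1)" for n
  proof -
    have "z ^ (n + j) = z powi (int k - 2) * z ^ (n + 1)"
      using power_int_pred_mult_power[OF z0, of j n] by (simp add: k_eq)
    with z0 show ?thesis by (simp add: k_eq)
  qed
  moreover have "(\<lambda>n. of_nat (n + k) * a n * z ^ (n + 1)) sums Fgf k z u"
    using Fgf_Suc_sums[of z u j] z u1 by (simp add: a_def k_eq)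
  ultimately show ?thesis
    by (simp add: sums_unique2)
qed

theorem theorem13:
  shows "(\<forall>k z u. k \<ge> 1 \<longrightarrow> z \<noteq> 0 \<longrightarrow> norm z < 1/4 \<longrightarrow> norm u < 1 \<longrightarrow> u \<noteq> Egf z \<longrightarrow>
            Fgf k z u = (1 / z powi (int k - 2)) *
              deriv (\<lambda>w. w powi (int k - 1) *
                 ((u * Fgf (k - 1) w u - Egf w * Fgf (k - 1) w (Egf w)) / (u - Egf w)) *
                 Mup w u) z)
       \<and> (\<forall>k z. z \<noteq> 0 \<longrightarrow> norm z < 1/4 \<longrightarrow> Bgf k z = Fgf k z (Egf z) * Dgf z)"
  using Fgf_eq_deriv Bgf_eq_Fgf_Egf by blast

end
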